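(* Let $\mathbb{E}$ be a finite-dimensional real inner product space and let $f_i:\mathbb{E}\to(-\infty,\infty]$, $i=1,\ldots,M$, be convex, directionally differentiable, continuous on their domains, with $\mathrm{dom} f_i$ closed, and suppose $F(x):=\min_{i\in[M]}f_i(x)$ is continuous on $\mathrm{dom} F$. If $x^*\in\mathrm{dom} F$ is a d-stationary point of the problem $\min_{x\in\mathbb{E}}F(x)$, then $x^*$ is a local minimizer of $F$.
   Context: $\mathrm{dom}\, g=\{x\mid g(x)<\infty\}$. Feasible cone: $\mathcal{F}(x;\mathcal{C})=\{d\mid \exists\varsigma'>0:\ x+\varsigma d\in\mathcal{C}\ \forall\varsigma\in(0,\varsigma')\}$ if $x\in\mathcal{C}$, else $\emptyset$. Directional differentiability: $g'(x;d)=\lim_{\varsigma\searrow0}(g(x+\varsigma d)-g(x))/\varsigma$ exists in $\mathbb{R}$ for all $x\in\mathrm{dom}\, g$, $d\in\mathcal{F}(x;\mathrm{dom}\, g)$. A point $x^*\in\mathrm{dom} F$ is a d-stationary point of $\min F$ if $F'(x^*;d)\ge0$ for all $d\in\mathcal{F}(x^*;\mathrm{dom} F)$. *)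

theory Defs
  imports "HOL-Analysis.Analysis"
begin

definition edom :: "('a \<Rightarrow> ereal) \<Rightarrow> 'a set" where
  "edom g = {x. g x < \<infinity>}"

definition feasible_cone :: "'a::real_vector \<Rightarrow> 'a set \<Rightarrow> 'a set" where
  "feasible_cone x C = (if x \<in> C then
      {d. \<exists>s'>0. \<forall>s. 0 < s \<and> s < s' \<longrightarrow> x + s *\<^sub>R d \<in> C} else {})"

definition ext_convex :: "('a::real_vector \<Rightarrow> ereal) \<Rightarrow> bool" where
  "ext_convex g = (\<forall>x y t. 0 \<le> t \<and> t \<le> 1 \<longrightarrow>
      g ((1 - t) *\<^sub>R x + t *\<^sub>R y) \<le> ereal (1 - t) * g x + ereal t * g y)"

definition has_dir_deriv :: "('a::real_vector \<Rightarrow> ereal) \<Rightarrow> 'a \<Rightarrow> 'a \<Rightarrow> real \<Rightarrow> bool" where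
  "has_dir_deriv g x d L =
     (((\<lambda>s. (real_of_ereal (g (x + s *\<^sub>R d)) - real_of_ereal (g x)) / s) \<longlongrightarrow> L) (at_right 0))"

definition dir_differentiable :: "('a::real_vector \<Rightarrow> ereal) \<Rightarrow> bool" where
  "dir_differentiable g = (\<forall>x \<in> edom g. \<forall>d \<in> feasible_cone x (edom g). \<exists>L. has_dir_deriv g x d L)"

definition d_stationary :: "('a::real_vector \<Rightarrow> ereal) \<Rightarrow> 'a \<Rightarrow> bool" where
  "d_stationary F x = (x \<in> edom F \<and>
     (\<forall>d \<in> feasible_cone x (edom F). \<exists>L. has_dir_deriv F x d L \<and> L \<ge> 0))"

definition local_minimizer :: "('a::metric_space \<Rightarrow> ereal) \<Rightarrow> 'a \<Rightarrow> bool" where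
  "local_minimizer F x = (\<exists>e>0. \<forall>y. dist y x < e \<longrightarrow> F x \<le> F y)"

end

theory Submission
  imports Defs
begin

text \<open>Near \<open>x\<^sup>*\<close> only the pieces active at \<open>x\<^sup>*\<close> matter: an inactive piece \<open>f\<^sub>i\<close> has
  \<open>f\<^sub>i(x\<^sup>*) > F(x\<^sup>*)\<close>, and this strict inequality persists nearby by continuity on the closed
  domain (outside the domain \<open>f\<^sub>i = \<infinity>\<close>). An active piece is a convex majorant of \<open>F\<close> touching it
  at \<open>x\<^sup>*\<close>; along the segment to any \<open>y\<close> with \<open>f\<^sub>i(y) < \<infinity>\<close> the difference quotients of \<open>F\<close> are
  bounded by the chord slope \<open>f\<^sub>i(y) - f\<^sub>i(x\<^sup>*)\<close>, so d-stationarity forces \<open>f\<^sub>i(y) \<ge> f\<^sub>i(x\<^sup>*)\<close>.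
  Hence every piece, and so their minimum \<open>F\<close>, stays above \<open>F(x\<^sup>*)\<close> near \<open>x\<^sup>*\<close>.\<close>

lemma local_minimizer_iff_eventually_nhds:
  "local_minimizer F x \<longleftrightarrow> eventually (\<lambda>y. F x \<le> F y) (nhds x)"
  unfolding local_minimizer_def eventually_nhds_metric by auto

lemma ext_convex_le_chord:
  assumes "ext_convex g" "g x = ereal a" "g y = ereal b" "0 \<le> s" "s \<le> 1"
  shows "g (x + s *\<^sub>R (y - x)) \<le> ereal ((1 - s) * a + s * b)"
proof -
  have "x + s *\<^sub>R (y - x) = (1 - s) *\<^sub>R x + s *\<^sub>R y"
    by (simp add: algebra_simps)
  then show ?thesis
    using assms unfolding ext_convex_def by (metis times_ereal.simps(1) plus_ereal.simps(1))
qed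

lemma ext_convex_convex_edom:
  assumes "ext_convex g"
  shows "convex (edom g)"
proof (rule convexI)
  fix x y and u v :: real
  assume x: "x \<in> edom g" and y: "y \<in> edom g" and uv: "0 \<le> u" "0 \<le> v" "u + v = 1"
  have "g (u *\<^sub>R x + v *\<^sub>R y) \<le> ereal u * g x + ereal v * g y"
    using assms uv unfolding ext_convex_def
    by (metis add_diff_cancel_right' le_add_same_cancel2)
  also have "\<dots> < \<infinity>"
    using x y uv unfolding edom_def
    by (cases "g x"; cases "g y") (auto simp: ereal_mult_less_right)
  finally show "u *\<^sub>R x + v *\<^sub>R y \<in> edom g" unfolding edom_def by simp
qed

lemma segment_direction_in_feasible_cone:
  assumes "convex S" "S \<subseteq> C" "x \<in> S" "y \<in> S"
  shows "y - x \<in> feasible_cone x C"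
proof -
  have "x + s *\<^sub>R (y - x) \<in> C" if "0 < s" "s < 1" for s
  proof -
    have "(1 - s) *\<^sub>R x + s *\<^sub>R y \<in> S"
      using assms(1,3,4) that by (intro convexD) auto
    then show ?thesis using assms(2) by (auto simp: algebra_simps)
  qed
  then show ?thesis
    using assms(2,3) unfolding feasible_cone_def by (auto intro!: exI[of _ 1])
qed

lemma dir_deriv_le_chord_slope:
  assumes g: "ext_convex g" and minorant: "\<And>z. h z \<le> g z"
    and no_minf: "\<And>z. h z \<noteq> -\<infinity>"
    and touch: "h x = ereal a" "g x = ereal a" and gy: "g y = ereal b"
    and L: "has_dir_deriv h x (y - x) L"
  shows "L \<le> b - a"
proof -
  have "(real_of_ereal (h (x + s *\<^sub>R (y - x))) - real_of_ereal (h x)) / s \<le> b - a"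
    if s: "0 < s" "s < 1" for s
  proof -
    have "h (x + s *\<^sub>R (y - x)) \<le> g (x + s *\<^sub>R (y - x))" by (rule minorant)
    also have "\<dots> \<le> ereal ((1 - s) * a + s * b)"
      using ext_convex_le_chord[OF g touch(2) gy] s by simp
    finally have "real_of_ereal (h (x + s *\<^sub>R (y - x))) \<le> (1 - s) * a + s * b"
      using no_minf by (cases "h (x + s *\<^sub>R (y - x))") auto
    then have "real_of_ereal (h (x + s *\<^sub>R (y - x))) - a \<le> s * (b - a)"
      by (simp add: algebra_simps)
    then show ?thesis
      using s touch(1) by (simp add: divide_le_eq mult.commute)
  qed
  then have "eventually (\<lambda>s. (real_of_ereal (h (x + s *\<^sub>R (y - x))) - real_of_ereal (h x)) / s
      \<le> b - a) (at_right 0)"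
    unfolding eventually_at_right_field by (intro exI[of _ 1]) auto
  with L show ?thesis
    unfolding has_dir_deriv_def by (intro tendsto_upperbound) auto
qed

lemma d_stationary_convex_majorant_global_min:
  assumes g: "ext_convex g" and minorant: "\<And>z. h z \<le> g z"
    and no_minf: "\<And>z. h z \<noteq> -\<infinity>"
    and stat: "d_stationary h x" and touch: "h x = g x"
  shows "g x \<le> g y"
proof (cases "g y = \<infinity>")
  case False
  obtain b where gy: "g y = ereal b"
    using False no_minf minorant by (metis ereal_infty_less_eq(2) ereal_cases)
  have "x \<in> edom h" using stat unfolding d_stationary_def by simp
  then obtain a where hx: "h x = ereal a"
    using no_minf unfolding edom_def by (cases "h x") auto
  have "edom g \<subseteq> edom h"
    using minorant unfolding edom_def by (metis (mono_tags) Collect_mono le_less_trans)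
  moreover have "x \<in> edom g" "y \<in> edom g"
    using hx touch gy unfolding edom_def by auto
  ultimately have "y - x \<in> feasible_cone x (edom h)"
    by (rule segment_direction_in_feasible_cone[OF ext_convex_convex_edom[OF g]])
  then obtain L where "has_dir_deriv h x (y - x) L" "0 \<le> L"
    using stat unfolding d_stationary_def by blast
  with dir_deriv_le_chord_slope[OF g minorant no_minf hx _ gy] hx touch gy show ?thesis
    by fastforce
qed simp

lemma eventually_gt_of_continuous_on_closed_edom:
  fixes g :: "'a::metric_space \<Rightarrow> ereal"
  assumes cont: "continuous_on (edom g) g" and closed: "closed (edom g)" and gt: "c < g x"
  shows "eventually (\<lambda>y. c < g y) (nhds x)"
proof (cases "x \<in> edom g")
  case True
  have "(g \<longlongrightarrow> g x) (at x within edom g)"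
    using cont True by (simp add: continuous_on_def)
  then have "eventually (\<lambda>y. c < g y) (at x within edom g)"
    using gt by (rule order_tendstoD)
  then have "eventually (\<lambda>y. y \<noteq> x \<longrightarrow> y \<in> edom g \<longrightarrow> c < g y) (nhds x)"
    by (simp add: eventually_at_filter)
  then show ?thesis
    by eventually_elim (use gt in \<open>auto simp: edom_def\<close>)
next
  case False
  have "eventually (\<lambda>y. y \<in> - edom g) (nhds x)"
    using closed False by (intro eventually_nhds_in_open) auto
  then show ?thesis
    by eventually_elim (use gt in \<open>auto simp: edom_def\<close>)
qed

theorem mainTheorem3:
  fixes f :: "nat \<Rightarrow> 'a::euclidean_space \<Rightarrow> ereal"
    and M :: nat and F :: "'a \<Rightarrow> ereal" and xs :: 'a
  assumes M_pos: "0 < M"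
    and no_minf: "\<And>i x. i < M \<Longrightarrow> f i x \<noteq> -\<infinity>"
    and conv: "\<And>i. i < M \<Longrightarrow> ext_convex (f i)"
    and dirdiff: "\<And>i. i < M \<Longrightarrow> dir_differentiable (f i)"
    and cont: "\<And>i. i < M \<Longrightarrow> continuous_on (edom (f i)) (f i)"
    and closed_dom: "\<And>i. i < M \<Longrightarrow> closed (edom (f i))"
    and F_def: "F = (\<lambda>x. Min ((\<lambda>i. f i x) ` {..<M}))"
    and F_cont: "continuous_on (edom F) F"
    and stat: "d_stationary F xs"
  shows "local_minimizer F xs"
proof -
  have F_le: "F x \<le> f i x" if "i < M" for i x
    unfolding F_def using that by (intro Min_le) auto
  have F_no_minf: "F x \<noteq> -\<infinity>" for x
  proof -
    have "F x \<in> (\<lambda>i. f i x) ` {..<M}" unfolding F_def using M_pos by (intro Min_in) auto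
    then show ?thesis using no_minf by (metis imageE lessThan_iff)
  qed
  have "eventually (\<lambda>y. F xs \<le> f i y) (nhds xs)" if i: "i < M" for i
  proof (cases "F xs = f i xs")
    case True
    then show ?thesis
      using d_stationary_convex_majorant_global_min[OF conv[OF i] F_le[OF i] F_no_minf stat]
      by (simp add: always_eventually)
  next
    case False
    then have "F xs < f i xs" using F_le[OF i] by (simp add: order_less_le)
    then have "eventually (\<lambda>y. F xs < f i y) (nhds xs)"
      by (rule eventually_gt_of_continuous_on_closed_edom[OF cont[OF i] closed_dom[OF i]])
    then show ?thesis by (rule eventually_mono) simp
  qed
  then have "eventually (\<lambda>y. \<forall>i\<in>{..<M}. F xs \<le> f i y) (nhds xs)"
    by (intro eventually_ball_finite) auto
  then show ?thesis
    unfolding local_minimizer_iff_eventually_nhds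
    by (rule eventually_mono) (use M_pos in \<open>auto simp: F_def intro!: Min.boundedI\<close>)
qed

end
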